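(* For $S\subseteq V$ let $\delta^-(S)$ be the set of fragments $(v_1,\dots,v_\ell)$ with $v_1\notin S$ and $\{v_1,\dots,v_\ell\}\cap S\neq\emptyset$, and for a fragment $F=(v_1,\dots,v_\ell)$ let $a_S(F)=|\{i\in\{1,\dots,\ell-1\}: v_i\notin S,\ v_{i+1}\in S\}|$. Then: (i) the fragment-incidence vector $x$ of every feasible solution satisfies $\sum_{F\in\delta^-(S)}x_F\ge\lceil\sum_{v\in S}q_v/Q\rceil$ for all $S\subseteq V$; (ii) for every $S\subseteq V$ and every $x\ge 0$, $\sum_{F}a_S(F)x_F\ge\sum_{F\in\delta^-(S)}x_F$, so the inequality in (i) implies the rounded capacity inequality $\sum_F a_S(F)x_F\ge\lceil\sum_{v\in S}q_v/Q\rceil$ for the same $S$.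
   Context: Instance data: a task set $V=\{1,\dots,n\}$, a depot $0$, $N=V\cup\{0\}$. For distinct $u,v\in N$ there are a travel time $t_{uv}\ge 0$ and travel cost $c_{uv}\ge0$. Each $v\in N$ has a duration $d_v\ge 0$, demand $q_v\ge 0$ and a time window $[\alpha_v,\beta_v]$; the depot has $d_0=q_0=0$, $[\alpha_0,\beta_0]=[0,T_{\max}]$. Vehicle capacity is $Q>0$ and there are $|K|$ vehicles. $D$ is a set of unordered pairs $\{u,v\}$ of distinct tasks, $V_D=\{v\in V:\exists \{u,v\}\in D\}$, each with nonnegative parameters $\delta^{\min}_{uv},\delta^{\max}_{uv},\delta^{\min}_{vu},\delta^{\max}_{vu}$; start times satisfy the dependency if either $b_u\le b_v$ and $\delta^{\min}_{uv}\le b_v-b_u\le\delta^{\max}_{uv}$, or $b_v\le b_u$ and $\delta^{\min}_{vu}\le b_u-b_v\le\delta^{\max}_{vu}$. A feasible solution consists of at most $|K|$ routes $(0,w_1,\dots,w_m,0)$ such that every task lies in exactly one route, each route has total demand at most $Q$, and there are start times $b_w\in[\alpha_w,\beta_w]$ with $b_{w_{i+1}}\ge b_{w_i}+d_{w_i}+t_{w_iw_{i+1}}$ and all pairs of $D$ satisfying their dependency. A fragment is a sequence $(v_1,\dots,v_\ell)$, $\ell\ge2$, with $v_1,v_\ell\in V_D\cup\{0\}$, intermediate nodes in $V\setminus V_D$, no task repeated, total demand of $v_1,\dots,v_{\ell-1}$ at most $Q$, admitting a time-feasible schedule. The fragments of a route are its maximal subsequences whose first and last elements are consecutive occurrences of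 nodes from $V_D\cup\{0\}$; the fragment-incidence vector $x$ (indexed by all fragments) has $x_F=1$ iff $F$ is a fragment of some route of the solution. *)

theory Defs
  imports Main Complex_Main
begin

text \<open>Instance data. Nodes are natural numbers; the depot is 0 and the tasks are 1..n.\<close>
text \<open>ntasks = n; ttime = t; tcost = c; dur = d; dem = q; twa/twb = alpha/beta; cap = Q; nveh = |K|;
  deps = D; dmin u v / dmax u v = delta min/max uv.\<close>
record vrp_inst =
  ntasks :: nat
  ttime :: "nat \<Rightarrow> nat \<Rightarrow> real"
  tcost :: "nat \<Rightarrow> nat \<Rightarrow> real"
  dur :: "nat \<Rightarrow> real"
  dem :: "nat \<Rightarrow> real"
  twa :: "nat \<Rightarrow> real"
  twb :: "nat \<Rightarrow> real"
  Tmax :: real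
  cap :: real
  nveh :: nat
  deps :: "nat set set"
  dmin :: "nat \<Rightarrow> nat \<Rightarrow> real"
  dmax :: "nat \<Rightarrow> nat \<Rightarrow> real"

definition tasks :: "vrp_inst \<Rightarrow> nat set" where
  "tasks I = {1..ntasks I}"

definition nodes :: "vrp_inst \<Rightarrow> nat set" where
  "nodes I = insert 0 (tasks I)"

definition dep_tasks :: "vrp_inst \<Rightarrow> nat set" where
  "dep_tasks I = {v \<in> tasks I. \<exists>u. {u, v} \<in> deps I}"

definition key_nodes :: "vrp_inst \<Rightarrow> nat set" where
  "key_nodes I = insert 0 (dep_tasks I)"

definition valid_instance :: "vrp_inst \<Rightarrow> bool" where
  "valid_instance I \<longleftrightarrow>
     (\<forall>u\<in>nodes I. \<forall>v\<in>nodes I. u \<noteq> v \<longrightarrow> ttime I u v \<ge> 0 \<and> tcost I u v \<ge> 0) \<and>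
     (\<forall>v\<in>nodes I. dur I v \<ge> 0 \<and> dem I v \<ge> 0) \<and>
     dur I 0 = 0 \<and> dem I 0 = 0 \<and> twa I 0 = 0 \<and> twb I 0 = Tmax I \<and>
     cap I > 0 \<and>
     (\<forall>p\<in>deps I. \<exists>u v. p = {u, v} \<and> u \<noteq> v \<and> u \<in> tasks I \<and> v \<in> tasks I) \<and>
     (\<forall>u v. {u, v} \<in> deps I \<longrightarrow>
        dmin I u v \<ge> 0 \<and> dmax I u v \<ge> 0 \<and> dmin I v u \<ge> 0 \<and> dmax I v u \<ge> 0)"

definition sched_ok :: "vrp_inst \<Rightarrow> nat list \<Rightarrow> (nat \<Rightarrow> real) \<Rightarrow> bool" where
  "sched_ok I p \<sigma> \<longleftrightarrow>
     (\<forall>i < length p. twa I (p ! i) \<le> \<sigma> i \<and> \<sigma> i \<le> twb I (p ! i)) \<and>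
     (\<forall>i. Suc i < length p \<longrightarrow>
        \<sigma> (Suc i) \<ge> \<sigma> i + dur I (p ! i) + ttime I (p ! i) (p ! Suc i))"

definition dep_ok :: "vrp_inst \<Rightarrow> (nat \<Rightarrow> real) \<Rightarrow> nat \<Rightarrow> nat \<Rightarrow> bool" where
  "dep_ok I b u v \<longleftrightarrow>
     (b u \<le> b v \<and> dmin I u v \<le> b v - b u \<and> b v - b u \<le> dmax I u v) \<or>
     (b v \<le> b u \<and> dmin I v u \<le> b u - b v \<and> b u - b v \<le> dmax I v u)"

definition is_fragment :: "vrp_inst \<Rightarrow> nat list \<Rightarrow> bool" where
  "is_fragment I F \<longleftrightarrow>
     length F \<ge> 2 \<and> hd F \<in> key_nodes I \<and> last F \<in> key_nodes I \<and>
     (\<forall>i. 0 < i \<and> i < length F - 1 \<longrightarrow> F ! i \<in> tasks I - dep_tasks I) \<and>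
     distinct (filter (\<lambda>v. v \<in> tasks I) F) \<and>
     sum_list (map (dem I) (butlast F)) \<le> cap I \<and>
     (\<exists>\<sigma>. sched_ok I F \<sigma>)"

definition fragments :: "vrp_inst \<Rightarrow> nat list set" where
  "fragments I = {F. is_fragment I F}"

definition route_frags :: "vrp_inst \<Rightarrow> nat list \<Rightarrow> nat list set" where
  "route_frags I r = {take (j - i + 1) (drop i r) | i j.
      i < j \<and> j < length r \<and> r ! i \<in> key_nodes I \<and> r ! j \<in> key_nodes I \<and>
      (\<forall>k. i < k \<and> k < j \<longrightarrow> r ! k \<notin> key_nodes I)}"

text \<open>A solution is a list of routes, each given by its task sequence (w_1,...,w_m);
  the route itself is (0,w_1,...,w_m,0).\<close>
definition feasible_solution :: "vrp_inst \<Rightarrow> nat list list \<Rightarrow> bool" where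
  "feasible_solution I R \<longleftrightarrow>
     length R \<le> nveh I \<and>
     (\<forall>ws\<in>set R. ws \<noteq> []) \<and>
     distinct (concat R) \<and> set (concat R) = tasks I \<and>
     (\<forall>ws\<in>set R. sum_list (map (dem I) ws) \<le> cap I) \<and>
     (\<exists>b :: nat \<Rightarrow> real.
        (\<forall>v\<in>tasks I. twa I v \<le> b v \<and> b v \<le> twb I v) \<and>
        (\<forall>ws\<in>set R. \<exists>\<sigma>. sched_ok I (0 # ws @ [0]) \<sigma> \<and>
              (\<forall>i < length ws. \<sigma> (Suc i) = b (ws ! i))) \<and>
        (\<forall>u v. {u, v} \<in> deps I \<longrightarrow> dep_ok I b u v))"

definition frag_incidence :: "vrp_inst \<Rightarrow> nat list list \<Rightarrow> nat list \<Rightarrow> real" where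
  "frag_incidence I R F =
     (if is_fragment I F \<and> (\<exists>ws\<in>set R. F \<in> route_frags I (0 # ws @ [0])) then 1 else 0)"

definition delta_in :: "vrp_inst \<Rightarrow> nat set \<Rightarrow> nat list set" where
  "delta_in I S = {F \<in> fragments I. hd F \<notin> S \<and> set F \<inter> S \<noteq> {}}"

definition a_coef :: "nat set \<Rightarrow> nat list \<Rightarrow> nat" where
  "a_coef S F = card {i. i + 1 < length F \<and> F ! i \<notin> S \<and> F ! (i + 1) \<in> S}"

end

theory Submission
  imports Defs
begin

text \<open>
  (i) A route meeting S starts at the depot, which lies outside S. Cutting the route at its
  key nodes, the fragment containing its first visit to S starts before that visit, hence
  outside S, so it belongs to \<open>\<delta>\<^sup>-(S)\<close>. Routes have disjoint task sets, so
  different routes give different fragments; and since every route carries demand at most Q,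
  at least \<open>\<lceil>q(S)/Q\<rceil>\<close> routes meet S.

  (ii) A fragment of \<open>\<delta>\<^sup>-(S)\<close> starts outside S and visits S, so somewhere it steps
  from outside S into S: \<open>a\<^sub>S(F) \<ge> 1\<close>, and the inequality holds termwise for \<open>x \<ge> 0\<close>.
\<close>

lemma hd_butlast_tl_last:
  assumes "2 \<le> length xs"
  shows "xs = hd xs # butlast (tl xs) @ [last xs]"
proof -
  obtain a ys where "xs = a # ys"
    using assms by (cases xs) auto
  with assms show ?thesis by auto
qed

lemma exists_entering_step:
  assumes "hd xs \<notin> S" and "x \<in> set xs" and "x \<in> S"
  shows "\<exists>i. Suc i < length xs \<and> xs ! i \<notin> S \<and> xs ! Suc i \<in> S"
  using assms
proof (induction xs)
  case Nil
  then show ?case by simp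
next
  case (Cons a ys)
  show ?case
  proof (cases "hd ys \<in> S \<and> ys \<noteq> []")
    case True
    then show ?thesis using Cons.prems(1) by (intro exI[of _ 0]) (auto simp: hd_conv_nth)
  next
    case False
    with Cons have "\<exists>i. Suc i < length ys \<and> ys ! i \<notin> S \<and> ys ! Suc i \<in> S"
      by (intro Cons.IH) auto
    then show ?thesis by (metis Suc_less_eq length_Cons nth_Cons_Suc)
  qed
qed

lemma consecutive_marks_around:
  assumes "r ! i0 \<in> K" "i0 < p" "p \<le> j0" "j0 < length r" "r ! j0 \<in> K"
  obtains i j where "i < p" "p \<le> j" "j < length r" "r ! i \<in> K" "r ! j \<in> K"
    "\<forall>k. i < k \<and> k < j \<longrightarrow> r ! k \<notin> K"
proof -
  define i where "i = (GREATEST k. k < p \<and> r ! k \<in> K)"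
  define j where "j = (LEAST k. p \<le> k \<and> r ! k \<in> K)"
  have i: "i < p" "r ! i \<in> K"
    using GreatestI_nat[of "\<lambda>k. k < p \<and> r ! k \<in> K" i0 p] assms unfolding i_def by auto
  have j: "p \<le> j" "r ! j \<in> K" "j \<le> j0"
    using LeastI[of "\<lambda>k. p \<le> k \<and> r ! k \<in> K" j0] Least_le[of "\<lambda>k. p \<le> k \<and> r ! k \<in> K" j0]
      assms unfolding j_def by auto
  have "r ! k \<notin> K" if "i < k" "k < j" for k
  proof (cases "k < p")
    case True
    then show ?thesis
      using that Greatest_le_nat[of "\<lambda>k. k < p \<and> r ! k \<in> K" k p] unfolding i_def by auto
  next
    case False
    then show ?thesis using that not_less_Least[of k "\<lambda>k. p \<le> k \<and> r ! k \<in> K"]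
      unfolding j_def by auto
  qed
  then show ?thesis using that i j assms by auto
qed

lemma sum_list_infix_le:
  fixes f :: "'a \<Rightarrow> 'b::ordered_comm_monoid_add"
  assumes "xs = us @ vs @ ws" and "\<forall>x\<in>set xs. 0 \<le> f x"
  shows "sum_list (map f vs) \<le> sum_list (map f xs)"
proof -
  have "0 \<le> sum_list (map f us)" "0 \<le> sum_list (map f ws)"
    using assms by (auto intro!: sum_list_nonneg)
  then show ?thesis using assms(1) by (simp add: add_increasing add_increasing2)
qed

lemma a_coef_pos:
  assumes "hd F \<notin> S" and "set F \<inter> S \<noteq> {}"
  shows "1 \<le> a_coef S F"
proof -
  let ?E = "{i. i + 1 < length F \<and> F ! i \<notin> S \<and> F ! (i + 1) \<in> S}"
  have "?E \<noteq> {}"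
    using exists_entering_step[of F S] assms by auto
  moreover have "finite ?E"
    by (rule finite_subset[of _ "{..<length F}"]) auto
  ultimately show ?thesis
    unfolding a_coef_def by (simp add: Suc_le_eq card_gt_0_iff)
qed

lemma fragment_shape:
  assumes "is_fragment I F"
  obtains a M b where "F = a # M @ [b]" and "a \<in> key_nodes I" and "b \<in> key_nodes I"
    and "set M \<subseteq> tasks I"
proof
  show "F = hd F # butlast (tl F) @ [last F]" and "hd F \<in> key_nodes I" "last F \<in> key_nodes I"
    using assms hd_butlast_tl_last[of F] unfolding is_fragment_def by auto
  show "set (butlast (tl F)) \<subseteq> tasks I"
  proof
    fix x assume "x \<in> set (butlast (tl F))"
    then obtain k where "k < length (butlast (tl F))" and "x = butlast (tl F) ! k"
      by (auto simp: in_set_conv_nth)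
    then have "Suc k < length F - 1" and "x = F ! Suc k"
      by (auto simp: nth_butlast nth_tl)
    then show "x \<in> tasks I"
      using assms unfolding is_fragment_def by auto
  qed
qed

lemma fragment_in_nodes:
  assumes "is_fragment I F"
  shows "set F \<subseteq> nodes I"
proof -
  obtain a M b where "F = a # M @ [b]" and "a \<in> key_nodes I" "b \<in> key_nodes I"
    and "set M \<subseteq> tasks I"
    using fragment_shape[OF assms] by metis
  moreover have "key_nodes I \<subseteq> nodes I"
    unfolding key_nodes_def nodes_def dep_tasks_def by auto
  ultimately show ?thesis
    by (auto simp: nodes_def)
qed

lemma length_fragment_le:
  assumes "is_fragment I F"
  shows "length F \<le> ntasks I + 2"
proof -
  obtain a M b where F: "F = a # M @ [b]" and M: "set M \<subseteq> tasks I"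
    using fragment_shape[OF assms] by metis
  have "distinct (filter (\<lambda>v. v \<in> tasks I) (a # M @ [b]))"
    using assms F unfolding is_fragment_def by auto
  then have "distinct (filter (\<lambda>v. v \<in> tasks I) M)"
    by (auto split: if_split_asm)
  then have "distinct M"
    using M by (simp add: filter_id_conv subset_iff)
  then have "length M \<le> card (tasks I)"
    using M by (metis card_mono distinct_card finite_atLeastAtMost tasks_def)
  then show ?thesis
    using F by (simp add: tasks_def)
qed

lemma finite_fragments: "finite (fragments I)"
proof (rule finite_subset)
  show "fragments I \<subseteq> {xs. set xs \<subseteq> nodes I \<and> length xs \<le> ntasks I + 2}"
    using fragment_in_nodes length_fragment_le unfolding fragments_def by blast
  show "finite {xs. set xs \<subseteq> nodes I \<and> length xs \<le> ntasks I + 2}"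
    by (rule finite_lists_length_le) (simp add: nodes_def tasks_def)
qed

lemma sum_delta_in_le_sum_a_coef:
  fixes x :: "nat list \<Rightarrow> real"
  assumes "\<forall>F\<in>fragments I. 0 \<le> x F"
  shows "(\<Sum>F\<in>delta_in I S. x F) \<le> (\<Sum>F\<in>fragments I. real (a_coef S F) * x F)"
proof -
  have sub: "delta_in I S \<subseteq> fragments I"
    unfolding delta_in_def by auto
  have "(\<Sum>F\<in>delta_in I S. x F) \<le> (\<Sum>F\<in>delta_in I S. real (a_coef S F) * x F)"
  proof (rule sum_mono)
    fix F assume F: "F \<in> delta_in I S"
    then have "1 \<le> real (a_coef S F)"
      using a_coef_pos unfolding delta_in_def by auto
    moreover have "0 \<le> x F"
      using assms F sub by auto
    ultimately show "x F \<le> real (a_coef S F) * x F"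
      using mult_right_mono[of 1 "real (a_coef S F)" "x F"] by simp
  qed
  also have "\<dots> \<le> (\<Sum>F\<in>fragments I. real (a_coef S F) * x F)"
    using assms by (intro sum_mono2[OF finite_fragments sub]) auto
  finally show ?thesis .
qed

lemma take_append_segment_drop: "r = take i r @ take n (drop i r) @ drop (i + n) r"
  by (metis append.assoc append_take_drop_id drop_drop take_add add.commute)

lemma set_route_frag_subset: "F \<in> route_frags I r \<Longrightarrow> set F \<subseteq> set r"
  unfolding route_frags_def by (auto dest: in_set_takeD in_set_dropD)

lemma route_frag_is_fragment:
  assumes I: "valid_instance I" and ws: "set ws \<subseteq> tasks I" "distinct ws"
    and load: "sum_list (map (dem I) ws) \<le> cap I"
    and sched: "sched_ok I (0 # ws @ [0]) \<sigma>" and F: "F \<in> route_frags I (0 # ws @ [0])"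
  shows "is_fragment I F"
proof -
  define r where "r = 0 # ws @ [0]"
  obtain i j where ij: "i < j" "j < length r" and F_eq: "F = take (j - i + 1) (drop i r)"
    and ends: "r ! i \<in> key_nodes I" "r ! j \<in> key_nodes I"
    and between: "\<forall>k. i < k \<and> k < j \<longrightarrow> r ! k \<notin> key_nodes I"
    using F unfolding route_frags_def r_def by blast
  have len: "length F = j - i + 1"
    using ij F_eq by simp
  have nth: "F ! k = r ! (i + k)" if "k < length F" for k
    using that ij F_eq by simp
  have r_nodes: "set r \<subseteq> nodes I"
    using ws unfolding r_def nodes_def by auto
  have "F ! k \<in> tasks I - dep_tasks I" if "0 < k" "k < length F - 1" for k
  proof -
    have "r ! (i + k) \<in> nodes I" "r ! (i + k) \<notin> key_nodes I"
      using that len ij between r_nodes by auto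
    then show ?thesis
      using that nth unfolding key_nodes_def nodes_def by auto
  qed
  moreover have "distinct (filter (\<lambda>v. v \<in> tasks I) F)"
  proof -
    have "filter (\<lambda>v. v \<in> tasks I) r = ws"
      using ws unfolding r_def by (simp add: filter_id_conv subset_iff tasks_def)
    then show ?thesis
      using \<open>distinct ws\<close> take_append_segment_drop[of r i "j - i + 1"] F_eq
      by (metis distinct_append filter_append)
  qed
  moreover have "sum_list (map (dem I) (butlast F)) \<le> cap I"
  proof -
    have "butlast F = take (j - i) (drop i r)"
      using ij F_eq by (simp add: butlast_take)
    moreover have "\<forall>v\<in>set r. 0 \<le> dem I v"
      using I r_nodes unfolding valid_instance_def by auto
    ultimately have "sum_list (map (dem I) (butlast F)) \<le> sum_list (map (dem I) r)"
      using sum_list_infix_le take_append_segment_drop by metis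
    also have "\<dots> = sum_list (map (dem I) ws)"
      using I unfolding r_def valid_instance_def by simp
    finally show ?thesis
      using load by simp
  qed
  moreover have "sched_ok I F (\<lambda>k. \<sigma> (i + k))"
    using sched ij unfolding sched_ok_def r_def[symmetric] by (auto simp: nth len)
  moreover have "F \<noteq> []"
    using len by auto
  then have "hd F = r ! i" and "last F = r ! j"
    using ij len nth[of 0] nth[of "length F - 1"] by (simp_all add: hd_conv_nth last_conv_nth)
  ultimately show ?thesis
    unfolding is_fragment_def using ij ends len by auto
qed

lemma route_has_entering_frag:
  assumes "0 \<notin> S" and "x \<in> set ws" and "x \<in> S"
  shows "\<exists>F\<in>route_frags I (0 # ws @ [0]). hd F \<notin> S \<and> set F \<inter> S \<noteq> {}"
proof -
  define r where "r = 0 # ws @ [0]"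
  define p where "p = (LEAST k. k < length r \<and> r ! k \<in> S)"
  have "x \<in> set r"
    using assms(2) unfolding r_def by simp
  then have "\<exists>k. k < length r \<and> r ! k \<in> S"
    using assms(3) by (metis in_set_conv_nth)
  then have p: "p < length r" "r ! p \<in> S"
    unfolding p_def by (metis (mono_tags, lifting) LeastI_ex)+
  have before_p: "r ! k \<notin> S" if "k < p" for k
    using that p not_less_Least[of k "\<lambda>k. k < length r \<and> r ! k \<in> S"] unfolding p_def by auto
  have depots: "r ! 0 \<in> key_nodes I" "r ! (length r - 1) \<in> key_nodes I"
    unfolding r_def key_nodes_def by (auto simp: nth_append)
  have "0 < p"
    using p assms(1) unfolding r_def by (cases p) auto
  have "p \<le> length r - 1" "length r - 1 < length r"
    using p by auto
  then obtain i j where ij: "i < p" "p \<le> j" "j < length r"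
    and ends: "r ! i \<in> key_nodes I" "r ! j \<in> key_nodes I"
    and between: "\<forall>k. i < k \<and> k < j \<longrightarrow> r ! k \<notin> key_nodes I"
    by (rule consecutive_marks_around[OF depots(1) \<open>0 < p\<close> _ _ depots(2)])
  define F where "F = take (j - i + 1) (drop i r)"
  have "F \<in> route_frags I r"
    unfolding route_frags_def F_def
    by (intro CollectI exI[of _ i] exI[of _ j]) (use ij ends between in auto)
  moreover have "hd F = r ! i"
    using ij unfolding F_def by (simp add: hd_drop_conv_nth)
  moreover have "r ! p \<in> set F"
  proof -
    have "F ! (p - i) = r ! p" and "p - i < length F"
      using ij unfolding F_def by auto
    then show ?thesis
      by (metis nth_mem)
  qed
  ultimately show ?thesis
    using p(2) before_p[OF \<open>i < p\<close>] unfolding r_def by (intro bexI[of _ F]) auto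
qed

lemma feasible_solution_route:
  assumes "feasible_solution I R" and "ws \<in> set R"
  shows "set ws \<subseteq> tasks I" and "distinct ws" and "sum_list (map (dem I) ws) \<le> cap I"
    and "\<exists>\<sigma>. sched_ok I (0 # ws @ [0]) \<sigma>"
  using assms unfolding feasible_solution_def by (auto simp: distinct_concat_iff)

lemma feasible_solution_routes_disjoint:
  assumes "feasible_solution I R" and "ws \<in> set R" "ws' \<in> set R" "ws \<noteq> ws'"
  shows "set ws \<inter> set ws' = {}"
  using assms unfolding feasible_solution_def distinct_concat_iff by blast

lemma demand_le_card_routes_meeting:
  assumes I: "valid_instance I" and R: "feasible_solution I R" and S: "S \<subseteq> tasks I"
  shows "(\<Sum>v\<in>S. dem I v) \<le> real (card {ws \<in> set R. set ws \<inter> S \<noteq> {}}) * cap I"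
proof -
  let ?A = "{ws \<in> set R. set ws \<inter> S \<noteq> {}}"
  have "set (concat R) = tasks I"
    using R unfolding feasible_solution_def by blast
  then have "S = (\<Union>ws\<in>?A. set ws \<inter> S)"
    using S by auto blast
  then have "(\<Sum>v\<in>S. dem I v) = (\<Sum>v\<in>(\<Union>ws\<in>?A. set ws \<inter> S). dem I v)"
    by (rule arg_cong)
  also have "\<dots> = (\<Sum>ws\<in>?A. \<Sum>v\<in>set ws \<inter> S. dem I v)"
    using feasible_solution_routes_disjoint[OF R] by (intro sum.UNION_disjoint) auto
  also have "\<dots> \<le> (\<Sum>ws\<in>?A. cap I)"
  proof (rule sum_mono)
    fix ws assume "ws \<in> ?A"
    then have ws: "ws \<in> set R" by simp
    have "(\<Sum>v\<in>set ws \<inter> S. dem I v) \<le> (\<Sum>v\<in>set ws. dem I v)"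
      using I feasible_solution_route(1)[OF R ws]
      by (intro sum_mono2) (auto simp: valid_instance_def nodes_def)
    also have "\<dots> = sum_list (map (dem I) ws)"
      using feasible_solution_route(2)[OF R ws] by (simp add: sum_list_distinct_conv_sum_set)
    also have "\<dots> \<le> cap I"
      using feasible_solution_route(3)[OF R ws] .
    finally show "(\<Sum>v\<in>set ws \<inter> S. dem I v) \<le> cap I" .
  qed
  finally show ?thesis
    by simp
qed

lemma card_routes_meeting_le_frag_incidence:
  assumes I: "valid_instance I" and R: "feasible_solution I R" and S: "S \<subseteq> tasks I"
  shows "real (card {ws \<in> set R. set ws \<inter> S \<noteq> {}}) \<le> (\<Sum>F\<in>delta_in I S. frag_incidence I R F)"
proof -
  let ?A = "{ws \<in> set R. set ws \<inter> S \<noteq> {}}"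
  let ?entering = "\<lambda>ws F. F \<in> route_frags I (0 # ws @ [0]) \<and> hd F \<notin> S \<and> set F \<inter> S \<noteq> {}"
  have "0 \<notin> S"
    using S by (auto simp: tasks_def)
  have "\<forall>ws\<in>?A. \<exists>F. ?entering ws F"
  proof
    fix ws assume "ws \<in> ?A"
    then obtain v where "v \<in> set ws" "v \<in> S"
      by auto
    then show "\<exists>F. ?entering ws F"
      using route_has_entering_frag[OF \<open>0 \<notin> S\<close>] by blast
  qed
  then obtain f where f_entering: "\<forall>ws\<in>?A. ?entering ws (f ws)"
    by (rule exE[OF bchoice])
  have f: "?entering ws (f ws)" if "ws \<in> ?A" for ws
    by (rule bspec[OF f_entering that])
  have f_fragment: "is_fragment I (f ws)" if "ws \<in> ?A" for ws
  proof -
    have ws: "ws \<in> set R"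
      using that by simp
    then obtain \<sigma> where "sched_ok I (0 # ws @ [0]) \<sigma>"
      using feasible_solution_route(4)[OF R] by blast
    from route_frag_is_fragment[OF I feasible_solution_route(1-3)[OF R ws] this]
    show ?thesis
      using f[OF that] by blast
  qed
  have in_route: "set (f ws) \<subseteq> set (0 # ws @ [0])" if "ws \<in> ?A" for ws
    by (rule set_route_frag_subset[OF conjunct1[OF f[OF that]]])
  have "inj_on f ?A"
  proof
    fix ws ws' assume ws: "ws \<in> ?A" and ws': "ws' \<in> ?A" and eq: "f ws = f ws'"
    obtain v where v: "v \<in> set (f ws)" "v \<in> S"
      using f[OF ws] by blast
    then have "v \<in> set ws" and "v \<in> set ws'"
      using in_route[OF ws] in_route[OF ws'] eq \<open>0 \<notin> S\<close> by auto
    then show "ws = ws'"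
      using feasible_solution_routes_disjoint[OF R] ws ws' by blast
  qed
  have incidence: "frag_incidence I R (f ws) = 1" if "ws \<in> ?A" for ws
    using f_fragment[OF that] conjunct1[OF f[OF that]] that unfolding frag_incidence_def by auto
  have "real (card ?A) = (\<Sum>ws\<in>?A. frag_incidence I R (f ws))"
    using incidence by simp
  also have "\<dots> = (\<Sum>F\<in>f ` ?A. frag_incidence I R F)"
    by (simp only: sum.reindex[OF \<open>inj_on f ?A\<close>] o_def)
  also have "\<dots> \<le> (\<Sum>F\<in>delta_in I S. frag_incidence I R F)"
  proof (rule sum_mono2)
    show "finite (delta_in I S)"
      using finite_fragments by (rule finite_subset[rotated]) (auto simp: delta_in_def)
    show "f ` ?A \<subseteq> delta_in I S"
      using f f_fragment by (auto simp: delta_in_def fragments_def)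
  qed (simp add: frag_incidence_def)
  finally show ?thesis .
qed

lemma frag_incidence_capacity_cut:
  assumes "valid_instance I" and "feasible_solution I R" and "S \<subseteq> tasks I"
  shows "of_int \<lceil>(\<Sum>v\<in>S. dem I v) / cap I\<rceil> \<le> (\<Sum>F\<in>delta_in I S. frag_incidence I R F)"
proof -
  define k where "k = card {ws \<in> set R. set ws \<inter> S \<noteq> {}}"
  have "0 < cap I"
    using assms(1) unfolding valid_instance_def by simp
  then have "(\<Sum>v\<in>S. dem I v) / cap I \<le> real k"
    using demand_le_card_routes_meeting[OF assms] unfolding k_def by (simp add: divide_le_eq)
  then have "\<lceil>(\<Sum>v\<in>S. dem I v) / cap I\<rceil> \<le> int k"
    by (simp add: ceiling_le_iff)
  then have "of_int \<lceil>(\<Sum>v\<in>S. dem I v) / cap I\<rceil> \<le> real k"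
    by (metis of_int_le_iff of_int_of_nat_eq)
  also have "\<dots> \<le> (\<Sum>F\<in>delta_in I S. frag_incidence I R F)"
    unfolding k_def by (rule card_routes_meeting_le_frag_incidence[OF assms])
  finally show ?thesis .
qed

theorem mainTheorem9:
  fixes I :: vrp_inst
  assumes "valid_instance I"
  shows "(\<forall>R S. feasible_solution I R \<longrightarrow> S \<subseteq> tasks I \<longrightarrow>
            (\<Sum>F\<in>delta_in I S. frag_incidence I R F)
              \<ge> of_int \<lceil>(\<Sum>v\<in>S. dem I v) / cap I\<rceil>)
       \<and> (\<forall>S (x :: nat list \<Rightarrow> real). S \<subseteq> tasks I \<longrightarrow> (\<forall>F\<in>fragments I. x F \<ge> 0) \<longrightarrow>
            (\<Sum>F\<in>fragments I. real (a_coef S F) * x F) \<ge> (\<Sum>F\<in>delta_in I S. x F)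
            \<and> ((\<Sum>F\<in>delta_in I S. x F) \<ge> of_int \<lceil>(\<Sum>v\<in>S. dem I v) / cap I\<rceil>
                 \<longrightarrow> (\<Sum>F\<in>fragments I. real (a_coef S F) * x F)
                       \<ge> of_int \<lceil>(\<Sum>v\<in>S. dem I v) / cap I\<rceil>))"
proof (intro conjI allI impI)
  fix R S
  assume "feasible_solution I R" and "S \<subseteq> tasks I"
  then show "of_int \<lceil>(\<Sum>v\<in>S. dem I v) / cap I\<rceil> \<le> (\<Sum>F\<in>delta_in I S. frag_incidence I R F)"
    by (rule frag_incidence_capacity_cut[OF assms])
next
  fix S and x :: "nat list \<Rightarrow> real"
  assume "\<forall>F\<in>fragments I. 0 \<le> x F"
  then show "(\<Sum>F\<in>delta_in I S. x F) \<le> (\<Sum>F\<in>fragments I. real (a_coef S F) * x F)"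
    by (rule sum_delta_in_le_sum_a_coef)
  then show "of_int \<lceil>(\<Sum>v\<in>S. dem I v) / cap I\<rceil> \<le> (\<Sum>F\<in>fragments I. real (a_coef S F) * x F)"
    if "of_int \<lceil>(\<Sum>v\<in>S. dem I v) / cap I\<rceil> \<le> (\<Sum>F\<in>delta_in I S. x F)"
    using that by linarith
qed

end
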